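(* For each integer $m\ge1$, let $H_m$ be the configuration whose underlying graph is the path $a - b - c - d$ (edges $ab$, $bc$, $cd$), with wakeup tags $t_b=t_c=0$, $t_a=m$, $t_d=m+1$. Then each configuration $H_m$ is feasible, and every dedicated leader election algorithm for $H_m$ takes time at least $m$.
   Context: Model. A configuration is a finite simple undirected connected graph $G$ in which each node $v$ is tagged with a non-negative integer $t_v$ (wakeup tag). Nodes are anonymous and communicate in synchronous global rounds. A node $v$ wakes up in the first global round $r\le t_v$ in which it receives a message, if any, and otherwise in global round $t_v$; its local clock is $0$ in its wakeup round, it acts from local round $1$, and nodes do not know the global clock. In each round a node transmits a message to all neighbours, listens, or terminates. A listening node receives $M$ if exactly one neighbour transmits ($M$), hears collision noise (distinct from silence and messages) if at least two neighbours transmit, and silence otherwise; a transmitting node hears nothing. A DRIP is a common function mapping a node's history (what it heard in each local round $0,\ldots,i-1$, including whether/by which message it was woken) to its action in local round $i\ge1$, with every node eventually terminating permanently; a decision function maps each node's final history to $\{0,1\}$; a dedicated leader election algorithm for $G$ is a DRIP plus decision function such that exactly one node of $G$ outputs $1$; $G$ is feasible if one exists. The time of such an algorithm is the number of rounds until the nodes terminate. *)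

theory Defs
  imports Main
begin

(* Heard M: exactly one neighbour transmitted M;
   Noise: at least two neighbours transmitted; Silence: none; Nothing: the node
   itself transmitted (a transmitting node hears nothing). *)
datatype 'm fb = Silence | Noise | Heard 'm | Nothing

datatype 'm act = Transmit 'm | Listen | Terminate

(* A history of length i
   lists what the node heard in local rounds 0..i-1 (entry 0 records how it was
   woken: Heard M = woken by message M, otherwise spontaneous wakeup);
   alg h is the action in local round (length h) >= 1. *)
type_synonym 'm drip = "'m fb list \<Rightarrow> 'm act"

definition dead :: "'m drip \<Rightarrow> 'm fb list \<Rightarrow> bool" where
  "dead alg h \<longleftrightarrow> (\<exists>i. 1 \<le> i \<and> i < length h \<and> alg (take i h) = Terminate)"

(* message transmitted by v in the current global round, given the histories H
   (None = asleep) at the start of the round *)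
definition txm :: "'m drip \<Rightarrow> ('v \<Rightarrow> 'm fb list option) \<Rightarrow> 'v \<Rightarrow> 'm option" where
  "txm alg H v = (case H v of None \<Rightarrow> None
      | Some h \<Rightarrow> (if dead alg h then None
                   else (case alg h of Transmit M \<Rightarrow> Some M | _ \<Rightarrow> None)))"

definition feedback :: "'m drip \<Rightarrow> ('v \<Rightarrow> 'v \<Rightarrow> bool) \<Rightarrow> ('v \<Rightarrow> 'm fb list option) \<Rightarrow> 'v \<Rightarrow> 'm fb" where
  "feedback alg E H v =
     (if txm alg H v \<noteq> None then Nothing
      else (let T = {u. E v u \<and> txm alg H u \<noteq> None} in
            if T = {} then Silence
            else if card T = 1 then Heard (the (txm alg H (THE u. u \<in> T)))
            else Noise))"

definition step :: "'m drip \<Rightarrow> ('v \<Rightarrow> 'v \<Rightarrow> bool) \<Rightarrow> ('v \<Rightarrow> nat) \<Rightarrow> nat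
                     \<Rightarrow> ('v \<Rightarrow> 'm fb list option) \<Rightarrow> ('v \<Rightarrow> 'm fb list option)" where
  "step alg E t r H = (\<lambda>v. case H v of
       Some h \<Rightarrow> Some (h @ [feedback alg E H v])
     | None \<Rightarrow> (case feedback alg E H v of
                  Heard M \<Rightarrow> Some [Heard M]
                | _ \<Rightarrow> (if r = t v then Some [feedback alg E H v] else None)))"

(* hist alg E t r v: history of v after global rounds 0..r-1 (None if still asleep) *)
fun hist :: "'m drip \<Rightarrow> ('v \<Rightarrow> 'v \<Rightarrow> bool) \<Rightarrow> ('v \<Rightarrow> nat) \<Rightarrow> nat \<Rightarrow> 'v \<Rightarrow> 'm fb list option" where
  "hist alg E t 0 = (\<lambda>_. None)"
| "hist alg E t (Suc r) = step alg E t r (hist alg E t r)"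

(* v terminates (for the first time) in global round r, with final history h *)
definition terminates_at :: "'m drip \<Rightarrow> ('v \<Rightarrow> 'v \<Rightarrow> bool) \<Rightarrow> ('v \<Rightarrow> nat) \<Rightarrow> 'v \<Rightarrow> nat \<Rightarrow> 'm fb list \<Rightarrow> bool" where
  "terminates_at alg E t v r h \<longleftrightarrow>
     hist alg E t r v = Some h \<and> alg h = Terminate \<and> \<not> dead alg h"

(* dedicated leader election algorithm (DRIP alg + decision function dec,
   output 1 = True) for the configuration with node set UNIV :: 'v set *)
definition dedicated_LE :: "'m drip \<Rightarrow> ('m fb list \<Rightarrow> bool) \<Rightarrow> ('v \<Rightarrow> 'v \<Rightarrow> bool) \<Rightarrow> ('v \<Rightarrow> nat) \<Rightarrow> bool" where
  "dedicated_LE alg dec E t \<longleftrightarrow>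
     (\<forall>v. \<exists>r h. terminates_at alg E t v r h) \<and>
     (\<exists>!v. \<exists>r h. terminates_at alg E t v r h \<and> dec h)"

definition run_time :: "'m drip \<Rightarrow> ('v \<Rightarrow> 'v \<Rightarrow> bool) \<Rightarrow> ('v \<Rightarrow> nat) \<Rightarrow> nat" where
  "run_time alg E t = Max {r. \<exists>v h. terminates_at alg E t v r h}"

definition feasible :: "('v \<Rightarrow> 'v \<Rightarrow> bool) \<Rightarrow> ('v \<Rightarrow> nat) \<Rightarrow> bool" where
  "feasible E t \<longleftrightarrow> (\<exists>(alg :: nat drip) dec. dedicated_LE alg dec E t)"

datatype node = A | B | C | D

definition pathE :: "node \<Rightarrow> node \<Rightarrow> bool" where
  "pathE x y \<longleftrightarrow> (x = A \<and> y = B) \<or> (x = B \<and> y = A) \<or> (x = B \<and> y = C) \<or> (x = C \<and> y = B)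
                 \<or> (x = C \<and> y = D) \<or> (x = D \<and> y = C)"

definition Htag :: "nat \<Rightarrow> node \<Rightarrow> nat" where
  "Htag m v = (case v of A \<Rightarrow> m | B \<Rightarrow> 0 | C \<Rightarrow> 0 | D \<Rightarrow> m + 1)"

end

theory Submission
  imports Defs
begin

text \<open>Feasibility: b and c listen for m rounds and then transmit once.  Node a has woken
  spontaneously one round earlier and hears the message after a silent round, whereas d is
  woken by it, so a can be elected from its history.  Lower bound: the reflection
  a \<leftrightarrow> d, b \<leftrightarrow> c is an automorphism of the path that preserves the wakeup tags
  during the first m rounds, so mirror nodes have equal histories after them.  A leader
  terminating in one of the rounds 0, ..., m would share its history, hence its decision,
  with its mirror image.\<close>

lemma dead_append:
  assumes "h \<noteq> []" "alg h = Terminate" "xs \<noteq> []"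
  shows "dead alg (h @ xs)"
  unfolding dead_def using assms
  by (intro exI[of _ "length h"]) (auto simp: Suc_le_eq)

lemma dead_snoc: "dead alg (h @ [x]) \<longleftrightarrow> dead alg h \<or> (h \<noteq> [] \<and> alg h = Terminate)"
  by (auto simp: dead_def less_Suc_eq Suc_le_eq)

lemma not_dead_singleton: "\<not> dead alg [x]"
  by (simp add: dead_def)

lemma hist_nonempty: "hist alg E t r v = Some h \<Longrightarrow> h \<noteq> []"
  by (induction r arbitrary: h) (auto simp: step_def split: option.splits fb.splits if_splits)

lemma hist_extends:
  assumes "hist alg E t r v = Some h"
  shows "\<exists>xs. hist alg E t (r + k) v = Some (h @ xs) \<and> length xs = k"
proof (induction k)
  case (Suc k)
  then obtain xs where "hist alg E t (r + k) v = Some (h @ xs)" "length xs = k" by blast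
  then show ?case by (auto simp: step_def)
qed (use assms in simp)

lemma terminates_at_unique:
  assumes "terminates_at alg E t v r h" "terminates_at alg E t v r' h'"
  shows "r = r' \<and> h = h'"
proof -
  have False if "terminates_at alg E t v r h" "terminates_at alg E t v r' h'" "r < r'"
    for r r' h h'
  proof -
    from that have hr: "hist alg E t r v = Some h" and "alg h = Terminate"
      and "hist alg E t r' v = Some h'" and "\<not> dead alg h'"
      by (auto simp: terminates_at_def)
    obtain xs where "hist alg E t (r + (r' - r)) v = Some (h @ xs)" "length xs = r' - r"
      using hist_extends[OF hr] by blast
    with \<open>hist alg E t r' v = Some h'\<close> \<open>r < r'\<close> have "h' = h @ xs" "xs \<noteq> []" by auto
    with hist_nonempty[OF hr] \<open>alg h = Terminate\<close> \<open>\<not> dead alg h'\<close> show False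
      using dead_append by blast
  qed
  then have "r = r'"
    using assms by (meson linorder_neqE_nat)
  with assms show ?thesis by (simp add: terminates_at_def)
qed

lemma finite_termination_rounds:
  assumes "finite (UNIV :: 'v set)"
  shows "finite {r. \<exists>(v :: 'v) h. terminates_at alg E t v r h}"
proof (rule finite_subset)
  show "finite (range (\<lambda>v :: 'v. THE r. \<exists>h. terminates_at alg E t v r h))"
    using assms by simp
  show "{r. \<exists>v h. terminates_at alg E t v r h} \<subseteq>
      (\<lambda>v. THE r. \<exists>h. terminates_at alg E t v r h) ` UNIV"
  proof
    fix r assume "r \<in> {r. \<exists>v h. terminates_at alg E t v r h}"
    then obtain v h where vh: "terminates_at alg E t v r h" by blast
    have "(THE r. \<exists>h. terminates_at alg E t v r h) = r"
    proof (rule the_equality)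
      show "\<exists>h. terminates_at alg E t v r h" using vh ..
    next
      fix r' assume "\<exists>h. terminates_at alg E t v r' h"
      then obtain h' where "terminates_at alg E t v r' h'" ..
      from terminates_at_unique[OF this vh] show "r' = r" ..
    qed
    then show "r \<in> (\<lambda>v. THE r. \<exists>h. terminates_at alg E t v r h) ` UNIV"
      by (rule image_eqI[OF sym UNIV_I])
  qed
qed

lemma le_run_time:
  assumes "finite (UNIV :: 'v set)" "terminates_at alg E t (v :: 'v) r h"
  shows "r \<le> run_time alg E t"
  unfolding run_time_def using assms finite_termination_rounds by (intro Max_ge) blast+

lemma txm_None: "H v = None \<Longrightarrow> txm alg H v = None"
  by (simp add: txm_def)

lemma feedback_transmitting: "txm alg H v \<noteq> None \<Longrightarrow> feedback alg E H v = Nothing"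
  by (simp add: feedback_def)

lemma feedback_Silence:
  assumes "txm alg H v = None" "\<And>u. E v u \<Longrightarrow> txm alg H u = None"
  shows "feedback alg E H v = Silence"
  using assms by (simp add: feedback_def)

lemma feedback_Heard:
  assumes "txm alg H v = None" "\<And>u. E v u \<and> txm alg H u \<noteq> None \<longleftrightarrow> u = w"
    and "txm alg H w = Some M"
  shows "feedback alg E H v = Heard M"
proof -
  have "{u. E v u \<and> txm alg H u \<noteq> None} = {w}" using assms(2) by blast
  with assms(1,3) show ?thesis by (simp add: feedback_def)
qed

lemma step_quiet:
  assumes "\<And>u. txm alg H u = None"
  shows "step alg E t r H v =
    (case H v of Some h \<Rightarrow> Some (h @ [Silence]) | None \<Rightarrow> if r = t v then Some [Silence] else None)"
  using feedback_Silence[of alg H, OF assms assms] by (simp add: step_def split: option.split)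

lemma feedback_automorphism:
  assumes "bij \<sigma>" "\<And>u w. E (\<sigma> u) (\<sigma> w) = E u w" "\<And>u. H (\<sigma> u) = H u"
  shows "feedback alg E H (\<sigma> v) = feedback alg E H v"
proof -
  have txm_\<sigma>: "txm alg H (\<sigma> u) = txm alg H u" for u
    using assms(3) by (simp add: txm_def)
  define N where "N w = {u. E w u \<and> txm alg H u \<noteq> None}" for w
  have "N (\<sigma> v) = \<sigma> ` N v"
  proof
    show "N (\<sigma> v) \<subseteq> \<sigma> ` N v"
    proof
      fix u assume "u \<in> N (\<sigma> v)"
      moreover obtain w where "u = \<sigma> w" using bij_is_surj[OF assms(1)] by blast
      ultimately show "u \<in> \<sigma> ` N v" by (simp add: N_def assms(2) txm_\<sigma>)
    qed
  qed (auto simp: N_def assms(2) txm_\<sigma>)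
  moreover have "card (\<sigma> ` N v) = card (N v)"
    using bij_is_inj[OF assms(1)] by (simp add: card_image inj_on_subset)
  moreover have "(THE u. u \<in> \<sigma> ` N v) = \<sigma> (THE u. u \<in> N v)" if "card (N v) = 1"
    using that by (elim card_1_singletonE) simp
  ultimately show ?thesis
    unfolding feedback_def Let_def N_def[symmetric] by (simp add: txm_\<sigma>)
qed

text \<open>The hypothesis on \<^term>\<open>min r\<close> says that the first r rounds cannot tell the
  wakeup tags of u and \<sigma> u apart.\<close>

lemma hist_automorphism:
  assumes "bij \<sigma>" "\<And>u w. E (\<sigma> u) (\<sigma> w) = E u w" "\<And>u. min r (t (\<sigma> u)) = min r (t u)"
  shows "hist alg E t r (\<sigma> v) = hist alg E t r v"
  using assms(3)
proof (induction r arbitrary: v)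
  case (Suc r)
  have "min r (t (\<sigma> u)) = min r (t u)" for u
    using Suc.prems[of u] by (metis min.absorb_iff1 min.assoc le_SucI order_refl)
  then have hist_\<sigma>: "hist alg E t r (\<sigma> u) = hist alg E t r u" for u
    using Suc.IH by blast
  have wakeup_\<sigma>: "r = t (\<sigma> v) \<longleftrightarrow> r = t v"
    using Suc.prems[of v] by (metis min_def not_less_eq_eq order_refl)
  have feedback_\<sigma>: "feedback alg E (hist alg E t r) (\<sigma> v) = feedback alg E (hist alg E t r) v"
    using assms(1,2) hist_\<sigma> by (rule feedback_automorphism)
  show ?case
    unfolding hist.simps step_def hist_\<sigma>[of v] wakeup_\<sigma> feedback_\<sigma> ..
qed simp

lemma less_run_time_by_symmetry:
  fixes \<sigma> :: "'v \<Rightarrow> 'v"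
  assumes "dedicated_LE alg dec E t" "finite (UNIV :: 'v set)"
    and "bij \<sigma>" "\<And>v. \<sigma> v \<noteq> v" "\<And>u w. E (\<sigma> u) (\<sigma> w) = E u w"
    and "\<And>u. min r (t (\<sigma> u)) = min r (t u)"
  shows "r < run_time alg E t"
proof -
  obtain v r' h where leader: "terminates_at alg E t v r' h" "dec h"
    and unique: "\<And>w r'' h'. terminates_at alg E t w r'' h' \<Longrightarrow> dec h' \<Longrightarrow> w = v"
    using assms(1) unfolding dedicated_LE_def by blast
  have "r < r'"
  proof (rule ccontr)
    assume "\<not> r < r'"
    then have "min r' (t (\<sigma> u)) = min r' (t u)" for u
      using assms(6)[of u] by (metis min.absorb_iff1 min.assoc not_less)
    then have "hist alg E t r' (\<sigma> v) = hist alg E t r' v"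
      using hist_automorphism[of \<sigma> E r' t] assms(3,5) by blast
    then have "terminates_at alg E t (\<sigma> v) r' h"
      using leader(1) by (simp add: terminates_at_def)
    with unique leader(2) assms(4) show False by blast
  qed
  also have "r' \<le> run_time alg E t"
    using assms(2) leader(1) by (rule le_run_time)
  finally show ?thesis .
qed

instance node :: finite
proof
  have "UNIV = {A, B, C, D}" using node.exhaust by blast
  then show "finite (UNIV :: node set)" by (metis finite.emptyI finite_insert)
qed

lemma Htag_simps [simp]: "Htag m A = m" "Htag m B = 0" "Htag m C = 0" "Htag m D = Suc m"
  by (simp_all add: Htag_def)

fun mirror :: "node \<Rightarrow> node" where
  "mirror A = D" | "mirror B = C" | "mirror C = B" | "mirror D = A"

lemma bij_mirror: "bij mirror"
  by (rule involuntory_imp_bij) (metis mirror.simps node.exhaust)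

lemma pathE_mirror: "pathE (mirror u) (mirror w) = pathE u w"
  by (cases u; cases w) (simp_all add: pathE_def)

lemma min_Htag_mirror: "min m (Htag m (mirror u)) = min m (Htag m u)"
  by (cases u) simp_all

lemma run_time_Htag_gt:
  assumes "dedicated_LE alg dec pathE (Htag m)"
  shows "m < run_time alg pathE (Htag m)"
proof (rule less_run_time_by_symmetry[OF assms])
  show "mirror v \<noteq> v" for v by (cases v) simp_all
qed (simp_all add: bij_mirror pathE_mirror min_Htag_mirror)

definition beacon :: "nat \<Rightarrow> nat drip" where
  "beacon m h = (if h = replicate (length h) Silence then
      (if length h \<le> m then Listen else if length h = Suc m then Transmit 0 else Terminate)
     else Terminate)"

definition beacon_dec :: "nat fb list \<Rightarrow> bool" where
  "beacon_dec h \<longleftrightarrow> h = [Silence, Heard 0]"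

lemma beacon_silent_not_dead: "r \<le> Suc (Suc m) \<Longrightarrow> \<not> dead (beacon m) (replicate r Silence)"
  by (auto simp: dead_def beacon_def min_def)

lemma txm_beacon_silent:
  assumes "H v = Some (replicate r Silence)" "r \<le> m"
  shows "txm (beacon m) H v = None"
  using assms beacon_silent_not_dead[of r m] by (simp add: txm_def beacon_def)

lemma hist_beacon_silent:
  assumes "1 \<le> m" "r \<le> Suc m"
  shows "hist (beacon m) pathE (Htag m) r v =
    (if v \<in> {B, C} \<and> 0 < r then Some (replicate r Silence)
     else if v = A \<and> r = Suc m then Some [Silence] else None)"
  using assms(2)
proof (induction r arbitrary: v)
  case (Suc r)
  let ?H = "hist (beacon m) pathE (Htag m) r"
  have H: "?H u = (if u \<in> {B, C} \<and> 0 < r then Some (replicate r Silence) else None)" for u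
    using Suc by simp
  have "txm (beacon m) ?H u = None" for u
    using H[of u] Suc.prems by (auto intro: txm_beacon_silent txm_None split: if_splits)
  then show ?case
    using H[of v] assms(1) Suc.prems
    by (cases v) (auto simp: step_quiet replicate_append_same)
qed simp

definition beacon_final :: "nat \<Rightarrow> node \<Rightarrow> nat fb list" where
  "beacon_final m v = (case v of A \<Rightarrow> [Silence, Heard 0] | D \<Rightarrow> [Heard 0]
     | _ \<Rightarrow> replicate (Suc m) Silence @ [Nothing])"

lemma hist_beacon_final:
  assumes "1 \<le> m"
  shows "hist (beacon m) pathE (Htag m) (Suc (Suc m)) v = Some (beacon_final m v)"
proof -
  let ?H = "hist (beacon m) pathE (Htag m) (Suc m)"
  have H: "?H A = Some [Silence]" "?H B = Some (replicate (Suc m) Silence)"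
    "?H C = Some (replicate (Suc m) Silence)" "?H D = None"
    using hist_beacon_silent[OF assms, of "Suc m"] by simp_all
  have txm_BC: "txm (beacon m) ?H B = Some 0" "txm (beacon m) ?H C = Some 0"
    using H(2,3) beacon_silent_not_dead[of "Suc m" m] by (simp_all add: txm_def beacon_def)
  have txm_AD: "txm (beacon m) ?H A = None" "txm (beacon m) ?H D = None"
    using H(1,4) assms by (simp_all add: txm_def beacon_def not_dead_singleton)
  have "feedback (beacon m) pathE ?H A = Heard 0"
    by (rule feedback_Heard[OF txm_AD(1) _ txm_BC(1)])
      (auto simp: pathE_def txm_BC simp del: hist.simps)
  moreover have "feedback (beacon m) pathE ?H D = Heard 0"
    by (rule feedback_Heard[OF txm_AD(2) _ txm_BC(2)])
      (auto simp: pathE_def txm_BC simp del: hist.simps)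
  moreover have "feedback (beacon m) pathE ?H u = Nothing" if "u \<in> {B, C}" for u
    using that txm_BC by (auto intro: feedback_transmitting)
  ultimately show ?thesis
    using H by (cases v) (simp_all add: step_def beacon_final_def)
qed

lemma terminates_at_beacon_final:
  assumes "1 \<le> m"
  shows "terminates_at (beacon m) pathE (Htag m) v (Suc (Suc m)) (beacon_final m v)"
proof -
  have "beacon m (beacon_final m v) = Terminate"
    by (cases v) (simp_all add: beacon_final_def beacon_def)
  moreover have "\<not> dead (beacon m) (beacon_final m v)"
  proof -
    have "\<not> dead (beacon m) ([Silence] @ [Heard 0])"
      unfolding dead_snoc using assms by (simp add: beacon_def not_dead_singleton)
    moreover have "\<not> dead (beacon m) (replicate (Suc m) Silence @ [Nothing])"
      unfolding dead_snoc using beacon_silent_not_dead[of "Suc m" m] by (simp add: beacon_def)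
    ultimately show ?thesis
      by (cases v) (simp_all add: beacon_final_def not_dead_singleton)
  qed
  ultimately show ?thesis
    using hist_beacon_final[OF assms] by (simp add: terminates_at_def)
qed

lemma feasible_Htag:
  assumes "1 \<le> m"
  shows "feasible pathE (Htag m)"
  unfolding feasible_def
proof (intro exI)
  note terminates = terminates_at_beacon_final[OF assms]
  show "dedicated_LE (beacon m) beacon_dec pathE (Htag m)"
    unfolding dedicated_LE_def
  proof (intro conjI allI ex1I)
    show "\<exists>r h. terminates_at (beacon m) pathE (Htag m) v r h" for v
      using terminates by blast
    show "\<exists>r h. terminates_at (beacon m) pathE (Htag m) A r h \<and> beacon_dec h"
      using terminates[of A] by (auto simp: beacon_dec_def beacon_final_def)
  next
    fix v assume "\<exists>r h. terminates_at (beacon m) pathE (Htag m) v r h \<and> beacon_dec h"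
    then obtain r h where "terminates_at (beacon m) pathE (Htag m) v r h" "beacon_dec h" by blast
    with terminates_at_unique[OF this(1) terminates[of v]] show "v = A"
      by (cases v) (auto simp: beacon_dec_def beacon_final_def)
  qed
qed

theorem lemma13:
  fixes m :: nat
  assumes "1 \<le> m"
  shows "feasible pathE (Htag m) \<and>
         (\<forall>(alg :: 'msg drip) (dec :: 'msg fb list \<Rightarrow> bool).
             dedicated_LE alg dec pathE (Htag m) \<longrightarrow> m \<le> run_time alg pathE (Htag m))"
  using feasible_Htag[OF assms] run_time_Htag_gt by (blast intro: less_imp_le)

end
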